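(* In $\lambda_{\mathrm{ch}}$: if $\Gamma ; \Delta \vdash \mathcal{C}$ with $\Delta = a_1 : A_1, \ldots, a_k : A_k$, then there exists a configuration $\mathcal{C}' \equiv \mathcal{C}$ such that $\mathcal{C}' = (\nu a_{k+1}) \ldots (\nu a_n)(M_1 \parallel \ldots \parallel M_m \parallel a_1(\vec V_1) \parallel \ldots \parallel a_n(\vec V_n))$ for some computations $M_1,\ldots,M_m$ and value sequences $\vec V_1,\ldots,\vec V_n$.
   Context: The calculus $\lambda_{\mathrm{ch}}$. Types $A,B ::= \mathbf{1} \mid A \to B \mid \mathsf{Chan}(A)$; values $V,W ::= \alpha \mid \lambda x.M \mid ()$ ($\alpha$ a variable or a name); computations $M,N ::= V\,W \mid \mathbf{let}\ x \Leftarrow M\ \mathbf{in}\ N \mid \mathbf{return}\ V \mid \mathbf{fork}\ M \mid \mathbf{give}\ V\ W \mid \mathbf{take}\ V \mid \mathbf{newCh}$, with term typing $\Gamma\vdash M:A$ (simple typing of the functional part; $\mathbf{give}\ V\ W:\mathbf 1$ for $V:A$, $W:\mathsf{Chan}(A)$; $\mathbf{take}\ V:A$ for $V:\mathsf{Chan}(A)$; $\mathbf{fork}\ M:\mathbf 1$ for $M:\mathbf 1$; $\mathbf{newCh}:\mathsf{Chan}(A)$). Configurations $\mathcal{C},\mathcal{D} ::= \mathcal{C} \parallel \mathcal{D} \mid (\nu a)\mathcal{C} \mid a(\vec V) \mid M$, where $a(\vec V)$ is a buffer named $a$ holding a (possibly empty) sequence of values. Configuration typing $\Gamma;\Delta\vdash\mathcal{C}$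 ($\Delta$ a linear environment mapping names to types): (Par) $\Gamma;\Delta_1\vdash\mathcal{C}_1$ and $\Gamma;\Delta_2\vdash\mathcal{C}_2$ give $\Gamma;\Delta_1,\Delta_2\vdash\mathcal{C}_1\parallel\mathcal{C}_2$ (disjoint split); (Chan) $\Gamma,a:\mathsf{Chan}(A);\Delta,a:A\vdash\mathcal{C}$ gives $\Gamma;\Delta\vdash(\nu a)\mathcal{C}$; (Buf) $\Gamma\vdash V_i:A$ for all $i$ gives $\Gamma;a:A\vdash a(\vec V)$; (Term) $\Gamma\vdash M:\mathbf 1$ gives $\Gamma;\cdot\vdash M$. Structural congruence $\equiv$: least congruence closed under configuration contexts $G ::= [\,] \mid G\parallel\mathcal{C}\mid(\nu a)G$, with commutativity and associativity of $\parallel$ and scope extrusion $\mathcal{C}\parallel(\nu a)\mathcal{D}\equiv(\nu a)(\mathcal{C}\parallel\mathcal{D})$ if $a\notin\mathsf{fv}(\mathcal{C})$. *)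

theory Defs
  imports Main
begin

type_synonym var = nat
type_synonym name = nat

datatype ty = TUnit | TFun ty ty | TChan ty

datatype atom = AVar var | AName name

datatype val = VAtom atom | VLam var comp | VUnit
and comp = App val val | Let var comp comp | Return val | Fork comp
  | Give val val | Take val | NewCh

datatype conf = Par conf conf | Nu name conf | Buf name "val list" | Term comp

type_synonym tenv = "atom \<Rightarrow> ty option"
type_synonym lenv = "name \<Rightarrow> ty option"

inductive vtyp :: "tenv \<Rightarrow> val \<Rightarrow> ty \<Rightarrow> bool"
and ctyp :: "tenv \<Rightarrow> comp \<Rightarrow> ty \<Rightarrow> bool" where
  T_Atom: "\<Gamma> \<alpha> = Some A \<Longrightarrow> vtyp \<Gamma> (VAtom \<alpha>) A"
| T_Lam: "ctyp (\<Gamma>(AVar x \<mapsto> A)) M B \<Longrightarrow> vtyp \<Gamma> (VLam x M) (TFun A B)"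
| T_Unit: "vtyp \<Gamma> VUnit TUnit"
| T_App: "vtyp \<Gamma> V (TFun A B) \<Longrightarrow> vtyp \<Gamma> W A \<Longrightarrow> ctyp \<Gamma> (App V W) B"
| T_Let: "ctyp \<Gamma> M A \<Longrightarrow> ctyp (\<Gamma>(AVar x \<mapsto> A)) N B \<Longrightarrow> ctyp \<Gamma> (Let x M N) B"
| T_Return: "vtyp \<Gamma> V A \<Longrightarrow> ctyp \<Gamma> (Return V) A"
| T_Fork: "ctyp \<Gamma> M TUnit \<Longrightarrow> ctyp \<Gamma> (Fork M) TUnit"
| T_Give: "vtyp \<Gamma> V A \<Longrightarrow> vtyp \<Gamma> W (TChan A) \<Longrightarrow> ctyp \<Gamma> (Give V W) TUnit"
| T_Take: "vtyp \<Gamma> V (TChan A) \<Longrightarrow> ctyp \<Gamma> (Take V) A"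
| T_NewCh: "ctyp \<Gamma> NewCh (TChan A)"

inductive cfgtyp :: "tenv \<Rightarrow> lenv \<Rightarrow> conf \<Rightarrow> bool" where
  T_Par: "cfgtyp \<Gamma> \<Delta>1 C1 \<Longrightarrow> cfgtyp \<Gamma> \<Delta>2 C2 \<Longrightarrow> dom \<Delta>1 \<inter> dom \<Delta>2 = {}
          \<Longrightarrow> cfgtyp \<Gamma> (\<Delta>1 ++ \<Delta>2) (Par C1 C2)"
| T_Chan: "AName a \<notin> dom \<Gamma> \<Longrightarrow> a \<notin> dom \<Delta> \<Longrightarrow>
           cfgtyp (\<Gamma>(AName a \<mapsto> TChan A)) (\<Delta>(a \<mapsto> A)) C \<Longrightarrow> cfgtyp \<Gamma> \<Delta> (Nu a C)"
| T_Buf: "(\<forall>V \<in> set Vs. vtyp \<Gamma> V A) \<Longrightarrow> cfgtyp \<Gamma> [a \<mapsto> A] (Buf a Vs)"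
| T_Term: "ctyp \<Gamma> M TUnit \<Longrightarrow> cfgtyp \<Gamma> Map.empty (Term M)"

(* names occurring in terms (names are never bound inside terms) *)
fun vnames :: "val \<Rightarrow> name set" and cnames :: "comp \<Rightarrow> name set" where
  "vnames (VAtom (AName a)) = {a}"
| "vnames (VAtom (AVar x)) = {}"
| "vnames (VLam x M) = cnames M"
| "vnames VUnit = {}"
| "cnames (App V W) = vnames V \<union> vnames W"
| "cnames (Let x M N) = cnames M \<union> cnames N"
| "cnames (Return V) = vnames V"
| "cnames (Fork M) = cnames M"
| "cnames (Give V W) = vnames V \<union> vnames W"
| "cnames (Take V) = vnames V"
| "cnames NewCh = {}"

fun fn :: "conf \<Rightarrow> name set" where
  "fn (Par C D) = fn C \<union> fn D"
| "fn (Nu a C) = fn C - {a}"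
| "fn (Buf a Vs) = insert a (\<Union>V \<in> set Vs. vnames V)"
| "fn (Term M) = cnames M"

fun allnames :: "conf \<Rightarrow> name set" where
  "allnames (Par C D) = allnames C \<union> allnames D"
| "allnames (Nu a C) = insert a (allnames C)"
| "allnames (Buf a Vs) = insert a (\<Union>V \<in> set Vs. vnames V)"
| "allnames (Term M) = cnames M"

fun vren :: "name \<Rightarrow> name \<Rightarrow> val \<Rightarrow> val" and cren :: "name \<Rightarrow> name \<Rightarrow> comp \<Rightarrow> comp" where
  "vren a b (VAtom (AName c)) = VAtom (AName (if c = a then b else c))"
| "vren a b (VAtom (AVar x)) = VAtom (AVar x)"
| "vren a b (VLam x M) = VLam x (cren a b M)"
| "vren a b VUnit = VUnit"
| "cren a b (App V W) = App (vren a b V) (vren a b W)"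
| "cren a b (Let x M N) = Let x (cren a b M) (cren a b N)"
| "cren a b (Return V) = Return (vren a b V)"
| "cren a b (Fork M) = Fork (cren a b M)"
| "cren a b (Give V W) = Give (vren a b V) (vren a b W)"
| "cren a b (Take V) = Take (vren a b V)"
| "cren a b NewCh = NewCh"

fun ren :: "name \<Rightarrow> name \<Rightarrow> conf \<Rightarrow> conf" where
  "ren a b (Par C D) = Par (ren a b C) (ren a b D)"
| "ren a b (Nu c C) = (if c = a then Nu c C else Nu c (ren a b C))"
| "ren a b (Buf c Vs) = Buf (if c = a then b else c) (map (vren a b) Vs)"
| "ren a b (Term M) = Term (cren a b M)"

(* structural congruence: least congruence closed under contexts
   G ::= [] | G || C | (nu a) G, with comm/assoc of || and scope extrusion;
   configurations are identified up to alpha-renaming of nu-bound names *)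
inductive scong :: "conf \<Rightarrow> conf \<Rightarrow> bool" (infix "\<equiv>\<^sub>c" 50) where
  SC_refl: "C \<equiv>\<^sub>c C"
| SC_sym: "C \<equiv>\<^sub>c D \<Longrightarrow> D \<equiv>\<^sub>c C"
| SC_trans: "C \<equiv>\<^sub>c D \<Longrightarrow> D \<equiv>\<^sub>c E \<Longrightarrow> C \<equiv>\<^sub>c E"
| SC_par: "C \<equiv>\<^sub>c D \<Longrightarrow> Par C E \<equiv>\<^sub>c Par D E"
| SC_nu: "C \<equiv>\<^sub>c D \<Longrightarrow> Nu a C \<equiv>\<^sub>c Nu a D"
| SC_comm: "Par C D \<equiv>\<^sub>c Par D C"
| SC_assoc: "Par C (Par D E) \<equiv>\<^sub>c Par (Par C D) E"
| SC_extr: "a \<notin> fn C \<Longrightarrow> Par C (Nu a D) \<equiv>\<^sub>c Nu a (Par C D)"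
| SC_alpha: "b \<notin> allnames C \<Longrightarrow> Nu a C \<equiv>\<^sub>c Nu b (ren a b C)"

fun pars :: "conf list \<Rightarrow> conf" where
  "pars [] = undefined"
| "pars [C] = C"
| "pars (C # Cs) = Par C (pars Cs)"

fun nus :: "name list \<Rightarrow> conf \<Rightarrow> conf" where
  "nus [] C = C"
| "nus (b # bs) C = Nu b (nus bs C)"

end

theory Submission
  imports Defs "HOL-Library.Multiset"
begin

text \<open>
  For parallel composition the restricted names of each side
  are chosen fresh for the other, so scope extrusion lifts both blocks of restrictions to the top,
  after which the flat components are reordered. A restriction \<open>(\<nu>a)\<close> is first alpha-renamed to
  a fresh name, which keeps all bound names distinct from each other and from the linear
  environment; the buffer of \<open>a\<close> then stays in place while its name moves from the linear
  environment to the restricted names. Freshness is tracked through free names only, because the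
  flat components contain no binders and structural congruence preserves free names.
\<close>

lemmas [trans] = SC_trans

lemma scong_Par_right: "C \<equiv>\<^sub>c D \<Longrightarrow> Par E C \<equiv>\<^sub>c Par E D"
  by (meson SC_comm SC_par SC_trans)

lemma scong_nus: "C \<equiv>\<^sub>c D \<Longrightarrow> nus bs C \<equiv>\<^sub>c nus bs D"
  by (induction bs) (auto intro: SC_nu)

lemma nus_append: "nus (xs @ ys) C = nus xs (nus ys C)"
  by (induction xs) auto

lemma pars_Cons: "xs \<noteq> [] \<Longrightarrow> pars (x # xs) = Par x (pars xs)"
  by (cases xs) auto

lemma pars_append: "xs \<noteq> [] \<Longrightarrow> ys \<noteq> [] \<Longrightarrow> pars (xs @ ys) \<equiv>\<^sub>c Par (pars xs) (pars ys)"
proof (induction xs)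
  case (Cons x xs)
  show ?case
  proof (cases "xs = []")
    case True
    then show ?thesis using Cons.prems by (simp add: pars_Cons SC_refl)
  next
    case False
    have "pars ((x # xs) @ ys) = Par x (pars (xs @ ys))"
      using Cons.prems by (simp add: pars_Cons)
    also have "\<dots> \<equiv>\<^sub>c Par x (Par (pars xs) (pars ys))"
      using Cons False by (simp add: scong_Par_right)
    also have "\<dots> \<equiv>\<^sub>c Par (Par x (pars xs)) (pars ys)" by (rule SC_assoc)
    finally show ?thesis using False by (simp add: pars_Cons)
  qed
qed simp

lemma pars_move_to_front: "pars (ys @ x # zs) \<equiv>\<^sub>c pars (x # ys @ zs)"
proof (cases "ys = []")
  case False
  have "pars (ys @ x # zs) \<equiv>\<^sub>c Par (pars ys) (pars (x # zs))"
    using False by (simp add: pars_append)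
  also have "\<dots> \<equiv>\<^sub>c Par (pars (x # zs)) (pars ys)" by (rule SC_comm)
  also have "\<dots> \<equiv>\<^sub>c Par x (pars (zs @ ys))"
  proof (cases "zs = []")
    case False
    have "Par (pars (x # zs)) (pars ys) = Par (Par x (pars zs)) (pars ys)"
      using False by (simp add: pars_Cons)
    also have "\<dots> \<equiv>\<^sub>c Par x (Par (pars zs) (pars ys))" by (rule SC_sym, rule SC_assoc)
    also have "\<dots> \<equiv>\<^sub>c Par x (pars (zs @ ys))"
      using False \<open>ys \<noteq> []\<close> by (simp add: scong_Par_right pars_append SC_sym)
    finally show ?thesis .
  qed (simp add: SC_refl)
  also have "\<dots> \<equiv>\<^sub>c Par x (pars (ys @ zs))"
  proof (cases "zs = []")
    case False
    have "pars (zs @ ys) \<equiv>\<^sub>c Par (pars zs) (pars ys)"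
      using False \<open>ys \<noteq> []\<close> by (rule pars_append)
    also have "\<dots> \<equiv>\<^sub>c Par (pars ys) (pars zs)" by (rule SC_comm)
    also have "\<dots> \<equiv>\<^sub>c pars (ys @ zs)"
      using False \<open>ys \<noteq> []\<close> by (simp add: pars_append SC_sym)
    finally show ?thesis by (rule scong_Par_right)
  qed (simp add: SC_refl)
  finally show ?thesis using False by (simp add: pars_Cons)
qed (simp add: SC_refl)

lemma pars_mset_scong: "mset xs = mset ys \<Longrightarrow> xs \<noteq> [] \<Longrightarrow> pars ys \<equiv>\<^sub>c pars xs"
proof (induction xs arbitrary: ys)
  case (Cons x xs)
  have "x \<in> set ys" using Cons.prems by (metis list.set_intros(1) set_mset_mset)
  then obtain ys1 ys2 where ys: "ys = ys1 @ x # ys2" by (meson split_list)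
  have rest: "mset xs = mset (ys1 @ ys2)" using Cons.prems ys by simp
  show ?case
  proof (cases "xs = []")
    case True
    then show ?thesis using rest ys by (simp add: SC_refl)
  next
    case False
    then have "ys1 @ ys2 \<noteq> []" using rest by auto
    have "pars ys \<equiv>\<^sub>c pars (x # ys1 @ ys2)" using ys pars_move_to_front by simp
    also have "\<dots> = Par x (pars (ys1 @ ys2))" using \<open>ys1 @ ys2 \<noteq> []\<close> by (simp add: pars_Cons)
    also have "\<dots> \<equiv>\<^sub>c Par x (pars xs)" using Cons.IH[OF rest] False by (simp add: scong_Par_right)
    finally show ?thesis using False by (simp add: pars_Cons)
  qed
qed simp

lemma Par_nus_scong: "set bs \<inter> fn C = {} \<Longrightarrow> Par C (nus bs D) \<equiv>\<^sub>c nus bs (Par C D)"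
proof (induction bs)
  case (Cons b bs)
  have "Par C (nus (b # bs) D) \<equiv>\<^sub>c Nu b (Par C (nus bs D))"
    using Cons.prems by (simp add: SC_extr)
  also have "\<dots> \<equiv>\<^sub>c Nu b (nus bs (Par C D))" using Cons by (simp add: SC_nu)
  finally show ?case by simp
qed (simp add: SC_refl)

lemma fn_nus: "fn (nus bs C) = fn C - set bs"
  by (induction bs) auto

lemma allnames_nus: "allnames (nus bs C) = set bs \<union> allnames C"
  by (induction bs) auto

lemma fn_pars: "xs \<noteq> [] \<Longrightarrow> fn (pars xs) = (\<Union>x\<in>set xs. fn x)"
  by (induction xs rule: pars.induct) auto

lemma allnames_pars: "xs \<noteq> [] \<Longrightarrow> allnames (pars xs) = (\<Union>x\<in>set xs. allnames x)"
  by (induction xs rule: pars.induct) auto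

lemma ren_pars: "xs \<noteq> [] \<Longrightarrow> ren a b (pars xs) = pars (map (ren a b) xs)"
  by (induction xs rule: pars.induct) auto

lemma ren_nus: "a \<notin> set bs \<Longrightarrow> ren a b (nus bs C) = nus bs (ren a b C)"
  by (induction bs) auto

lemma finite_vnames: "finite (vnames V)" and finite_cnames: "finite (cnames M)"
  by (induction V and M rule: vnames_cnames.induct) auto

lemma finite_fn: "finite (fn C)"
  by (induction C) (auto simp: finite_vnames finite_cnames)

lemma fn_subset_allnames: "fn C \<subseteq> allnames C"
  by (induction C) auto

lemma vnames_vren_fresh: "b \<notin> vnames V \<Longrightarrow> vnames (vren a b V) - {b} = vnames V - {a}"
  and cnames_cren_fresh: "b \<notin> cnames M \<Longrightarrow> cnames (cren a b M) - {b} = cnames M - {a}"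
  by (induction V and M rule: vnames_cnames.induct) auto

lemma fn_ren_fresh: "b \<notin> allnames C \<Longrightarrow> fn (ren a b C) - {b} = fn C - {a}"
proof (induction C)
  case (Par C D)
  then show ?case by (simp add: Un_Diff)
next
  case (Nu c C)
  show ?case
  proof (cases "c = a")
    case True
    then show ?thesis using Nu.prems fn_subset_allnames[of C] by auto
  next
    case False
    then have "fn (ren a b (Nu c C)) - {b} = (fn (ren a b C) - {b}) - {c}" by auto
    also have "\<dots> = fn (Nu c C) - {a}" using Nu by auto
    finally show ?thesis .
  qed
next
  case (Buf c Vs)
  have "(\<Union>V\<in>set Vs. vnames (vren a b V)) - {b} = (\<Union>V\<in>set Vs. vnames (vren a b V) - {b})"
    by blast
  also have "\<dots> = (\<Union>V\<in>set Vs. vnames V - {a})"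
    using Buf.prems by (intro SUP_cong refl vnames_vren_fresh) auto
  also have "\<dots> = (\<Union>V\<in>set Vs. vnames V) - {a}" by blast
  finally show ?case using Buf.prems by (cases "c = a") (simp_all add: insert_Diff_if)
next
  case (Term M)
  then show ?case by (simp add: cnames_cren_fresh)
qed

lemma scong_fn: "C \<equiv>\<^sub>c D \<Longrightarrow> fn C = fn D"
  by (induction rule: scong.induct) (auto simp: fn_ren_fresh)

lemma cfgtyp_dom_subset_fn: "cfgtyp \<Gamma> \<Delta> C \<Longrightarrow> dom \<Delta> \<subseteq> fn C"
  by (induction rule: cfgtyp.induct) auto

definition par_body :: "comp list \<Rightarrow> (name \<Rightarrow> val list) \<Rightarrow> name list \<Rightarrow> conf list" where
  "par_body Ms Vs ns = map Term Ms @ map (\<lambda>n. Buf n (Vs n)) ns"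

lemma allnames_par_body:
  "par_body Ms Vs ns \<noteq> [] \<Longrightarrow> allnames (pars (par_body Ms Vs ns)) = fn (pars (par_body Ms Vs ns))"
  by (auto simp: fn_pars allnames_pars par_body_def)

definition canonical ::
    "lenv \<Rightarrow> name set \<Rightarrow> conf \<Rightarrow> name list \<Rightarrow> comp list \<Rightarrow> name list \<Rightarrow> (name \<Rightarrow> val list) \<Rightarrow> bool"
  where "canonical \<Delta> F C bs Ms ns Vs \<longleftrightarrow>
    distinct bs \<and> set bs \<inter> (F \<union> dom \<Delta>) = {} \<and> distinct ns \<and> set ns = dom \<Delta> \<union> set bs \<and>
    par_body Ms Vs ns \<noteq> [] \<and> nus bs (pars (par_body Ms Vs ns)) \<equiv>\<^sub>c C"

lemma canonical_fn_body:
  "canonical \<Delta> F C bs Ms ns Vs \<Longrightarrow> fn (pars (par_body Ms Vs ns)) \<subseteq> fn C \<union> set bs"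
  unfolding canonical_def using scong_fn fn_nus by blast

lemma canonical_Par:
  assumes c1: "canonical \<Delta>1 (F \<union> fn C2) C1 bs1 Ms1 ns1 Vs1"
    and c2: "canonical \<Delta>2 (F \<union> set bs1 \<union> fn C1) C2 bs2 Ms2 ns2 Vs2"
    and dom1: "dom \<Delta>1 \<subseteq> fn C1" and dom2: "dom \<Delta>2 \<subseteq> fn C2"
    and disj: "dom \<Delta>1 \<inter> dom \<Delta>2 = {}"
  shows "canonical (\<Delta>1 ++ \<Delta>2) F (Par C1 C2) (bs1 @ bs2) (Ms1 @ Ms2) (ns1 @ ns2)
           (\<lambda>n. if n \<in> set ns1 then Vs1 n else Vs2 n)" (is "canonical _ _ _ _ _ _ ?Vs")
proof -
  define B1 where "B1 = par_body Ms1 Vs1 ns1"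
  define B2 where "B2 = par_body Ms2 Vs2 ns2"
  note c1' = c1[unfolded canonical_def, folded B1_def]
  note c2' = c2[unfolded canonical_def, folded B2_def]
  have E1: "nus bs1 (pars B1) \<equiv>\<^sub>c C1" and E2: "nus bs2 (pars B2) \<equiv>\<^sub>c C2"
    using c1' c2' by simp_all
  have fresh1: "set bs1 \<inter> fn (nus bs2 (pars B2)) = {}"
    using c1' scong_fn[OF E2] by auto
  have fresh2: "set bs2 \<inter> fn (pars B1) = {}"
    using c2' canonical_fn_body[OF c1, folded B1_def] by auto
  have ns_disj: "set ns1 \<inter> set ns2 = {}"
    using c1' c2' dom1 dom2 disj by auto
  have perm: "mset (B1 @ B2) = mset (par_body (Ms1 @ Ms2) ?Vs (ns1 @ ns2))"
  proof -
    have "map (\<lambda>n. Buf n (?Vs n)) ns1 = map (\<lambda>n. Buf n (Vs1 n)) ns1"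
      and "map (\<lambda>n. Buf n (?Vs n)) ns2 = map (\<lambda>n. Buf n (Vs2 n)) ns2"
      using ns_disj by auto
    note map_Vs = this
    show ?thesis unfolding B1_def B2_def par_body_def map_append map_Vs by simp
  qed
  have ne: "par_body (Ms1 @ Ms2) ?Vs (ns1 @ ns2) \<noteq> []"
    using perm c1' by (metis append_is_Nil_conv mset_zero_iff)
  have to_body: "nus bs1 (nus bs2 (pars (B1 @ B2))) \<equiv>\<^sub>c
      nus (bs1 @ bs2) (pars (par_body (Ms1 @ Ms2) ?Vs (ns1 @ ns2)))"
    unfolding nus_append using pars_mset_scong[OF perm[symmetric] ne] by (intro scong_nus)
  have "Par C1 C2 \<equiv>\<^sub>c nus bs1 (nus bs2 (pars (B1 @ B2)))"
  proof -
    have "Par C1 C2 \<equiv>\<^sub>c Par (nus bs1 (pars B1)) (nus bs2 (pars B2))"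
      using SC_par[OF SC_sym[OF E1]] scong_Par_right[OF SC_sym[OF E2]] by (rule SC_trans)
    also have "\<dots> \<equiv>\<^sub>c Par (nus bs2 (pars B2)) (nus bs1 (pars B1))" by (rule SC_comm)
    also have "\<dots> \<equiv>\<^sub>c nus bs1 (Par (nus bs2 (pars B2)) (pars B1))"
      using fresh1 by (rule Par_nus_scong)
    also have "\<dots> \<equiv>\<^sub>c nus bs1 (Par (pars B1) (nus bs2 (pars B2)))" by (rule scong_nus, rule SC_comm)
    also have "\<dots> \<equiv>\<^sub>c nus bs1 (nus bs2 (Par (pars B1) (pars B2)))"
      using fresh2 by (intro scong_nus Par_nus_scong)
    also have "\<dots> \<equiv>\<^sub>c nus bs1 (nus bs2 (pars (B1 @ B2)))"
      using c1' c2' by (intro scong_nus SC_sym[OF pars_append]) auto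
    finally show ?thesis .
  qed
  from SC_sym[OF SC_trans[OF this to_body]]
  have "nus (bs1 @ bs2) (pars (par_body (Ms1 @ Ms2) ?Vs (ns1 @ ns2))) \<equiv>\<^sub>c Par C1 C2"
    by (simp only: nus_append)
  moreover have "distinct (bs1 @ bs2)" and "set (bs1 @ bs2) \<inter> (F \<union> dom (\<Delta>1 ++ \<Delta>2)) = {}"
    using c1' c2' dom1 dom2 by auto
  moreover have "distinct (ns1 @ ns2)" and "set (ns1 @ ns2) = dom (\<Delta>1 ++ \<Delta>2) \<union> set (bs1 @ bs2)"
    using c1' c2' ns_disj by auto
  ultimately show ?thesis using ne unfolding canonical_def by blast
qed

lemma canonical_Nu:
  assumes c0: "canonical (\<Delta>(a \<mapsto> A)) F C bs Ms ns Vs"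
    and a: "a \<notin> dom \<Delta>"
    and b: "b \<notin> F \<union> set ns \<union> fn C"
  shows "canonical \<Delta> F (Nu a C) (b # bs) (map (cren a b) Ms)
           (map (\<lambda>n. if n = a then b else n) ns) (\<lambda>n. map (vren a b) (Vs (if n = b then a else n)))"
    (is "canonical _ _ _ _ ?Ms ?ns ?Vs")
proof -
  define B where "B = par_body Ms Vs ns"
  note c0' = c0[unfolded canonical_def, folded B_def]
  have E: "nus bs (pars B) \<equiv>\<^sub>c C" using c0' by simp
  have a_bs: "a \<notin> set bs" and a_ns: "a \<in> set ns" using c0' by auto
  have b_fresh: "b \<notin> allnames (nus bs (pars B))"
    using b c0' canonical_fn_body[OF c0, folded B_def]
    by (simp add: allnames_nus allnames_par_body[of Ms Vs ns, folded B_def]) blast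
  have alpha: "Nu a C \<equiv>\<^sub>c Nu b (ren a b (nus bs (pars B)))"
    using SC_nu[OF SC_sym[OF E]] SC_alpha[OF b_fresh] by (rule SC_trans)
  have "map (ren a b) B = par_body ?Ms ?Vs ?ns"
    using b a_ns unfolding B_def par_body_def by auto
  then have "ren a b (nus bs (pars B)) = nus bs (pars (par_body ?Ms ?Vs ?ns))"
    using c0' a_bs by (simp add: ren_nus ren_pars)
  with alpha have "nus (b # bs) (pars (par_body ?Ms ?Vs ?ns)) \<equiv>\<^sub>c Nu a C"
    by (simp add: SC_sym)
  moreover have "distinct ?ns"
    using c0' b by (auto simp: distinct_map inj_on_def)
  ultimately show ?thesis
    using c0' a b unfolding canonical_def by (auto simp: par_body_def)
qed

lemma canonical_exists:
  assumes "cfgtyp \<Gamma> \<Delta> C" and "finite F"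
  shows "\<exists>bs Ms ns Vs. canonical \<Delta> F C bs Ms ns Vs"
  using assms
proof (induction arbitrary: F rule: cfgtyp.induct)
  case (T_Par \<Gamma> \<Delta>1 C1 \<Delta>2 C2)
  obtain bs1 Ms1 ns1 Vs1 where c1: "canonical \<Delta>1 (F \<union> fn C2) C1 bs1 Ms1 ns1 Vs1"
    using T_Par.IH(1)[of "F \<union> fn C2"] T_Par.prems finite_fn by blast
  obtain bs2 Ms2 ns2 Vs2 where c2: "canonical \<Delta>2 (F \<union> set bs1 \<union> fn C1) C2 bs2 Ms2 ns2 Vs2"
    using T_Par.IH(2)[of "F \<union> set bs1 \<union> fn C1"] T_Par.prems finite_fn by blast
  show ?case
    by (intro exI) (rule canonical_Par[OF c1 c2 cfgtyp_dom_subset_fn[OF T_Par.hyps(1)]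
        cfgtyp_dom_subset_fn[OF T_Par.hyps(2)] T_Par.hyps(3)])
next
  case (T_Chan a \<Gamma> \<Delta> A C)
  obtain bs Ms ns Vs where c: "canonical (\<Delta>(a \<mapsto> A)) F C bs Ms ns Vs"
    using T_Chan.IH[OF T_Chan.prems] by blast
  have "finite (F \<union> set ns \<union> fn C)" using T_Chan.prems by (simp add: finite_fn)
  then obtain b where fresh: "b \<notin> F \<union> set ns \<union> fn C"
    using ex_new_if_finite[OF infinite_UNIV_nat] by metis
  show ?case by (intro exI) (rule canonical_Nu[OF c T_Chan.hyps(2) fresh])
next
  case (T_Buf Vs \<Gamma> A a)
  have "canonical [a \<mapsto> A] F (Buf a Vs) [] [] [a] (\<lambda>_. Vs)"
    by (simp add: canonical_def par_body_def SC_refl)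
  then show ?case by blast
next
  case (T_Term \<Gamma> M)
  have "canonical Map.empty F (Term M) [] [M] [] (\<lambda>_. [])"
    by (simp add: canonical_def par_body_def SC_refl)
  then show ?case by blast
qed

theorem lemma6:
  fixes \<Gamma> :: tenv and \<Delta> :: lenv and C :: conf and as :: "name list"
  assumes "cfgtyp \<Gamma> \<Delta> C"
    and "distinct as" and "set as = dom \<Delta>"
  shows "\<exists>C' bs Ms Vss.
           C' \<equiv>\<^sub>c C \<and> distinct (as @ bs) \<and> length Vss = length (as @ bs) \<and>
           map Term Ms @ map2 Buf (as @ bs) Vss \<noteq> [] \<and>
           C' = nus bs (pars (map Term Ms @ map2 Buf (as @ bs) Vss))"
proof -
  obtain bs Ms ns Vs where c: "canonical \<Delta> {} C bs Ms ns Vs"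
    using canonical_exists[OF assms(1)] by blast
  then have distinct: "distinct (as @ bs)" using assms unfolding canonical_def by auto
  with c assms have "mset ns = mset (as @ bs)"
    unfolding canonical_def by (subst set_eq_iff_mset_eq_distinct[symmetric]) auto
  then have perm: "mset (par_body Ms Vs ns) = mset (par_body Ms Vs (as @ bs))"
    unfolding par_body_def by simp
  have ne: "par_body Ms Vs ns \<noteq> []" and E: "nus bs (pars (par_body Ms Vs ns)) \<equiv>\<^sub>c C"
    using c unfolding canonical_def by simp_all
  have "nus bs (pars (par_body Ms Vs (as @ bs))) \<equiv>\<^sub>c C"
    using scong_nus[OF pars_mset_scong[OF perm ne]] E by (rule SC_trans)
  moreover have "par_body Ms Vs (as @ bs) \<noteq> []"
    using ne perm by (metis mset_zero_iff)
  moreover have "par_body Ms Vs (as @ bs) = map Term Ms @ map2 Buf (as @ bs) (map Vs (as @ bs))"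
    unfolding par_body_def using map2_map_map[of Buf "\<lambda>n. n" "as @ bs" Vs] by simp
  ultimately show ?thesis
    using distinct by (intro exI[of _ "nus bs (pars (par_body Ms Vs (as @ bs)))"] exI[of _ bs]
        exI[of _ Ms] exI[of _ "map Vs (as @ bs)"]) simp
qed

end
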